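(* For every integer $r\ge2$, \[K_{A_r}(2\alpha_1+2\alpha_2+\cdots+2\alpha_r)=\frac{(5-\sqrt5)^r+(5+\sqrt5)^r}{5\cdot 2^r}.\]
   Context: $\varepsilon_1,\dots,\varepsilon_{r+1}$ is the standard basis of $\mathbb{R}^{r+1}$, $\alpha_i=\varepsilon_i-\varepsilon_{i+1}$, so $2\alpha_1+\cdots+2\alpha_r=2\varepsilon_1-2\varepsilon_{r+1}$. $\Phi^+_{A_r}=\{\varepsilon_i-\varepsilon_j:1\le i<j\le r+1\}$ and $K_{A_r}(\mu)$ is the number of finite multisets of elements of $\Phi^+_{A_r}$ summing to $\mu$. *)

theory Defs
  imports "HOL-Analysis.Analysis" "HOL-Library.Multiset"
begin

text \<open>Vectors of \<real>^(r+1) with integer coordinates are modelled as functions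
  nat \<Rightarrow> int, coordinates indexed by 1..r+1 (all other coordinates are 0).\<close>

definition eps :: "nat \<Rightarrow> nat \<Rightarrow> int" where
  "eps i = (\<lambda>k. if k = i then 1 else 0)"

definition posroots_A :: "nat \<Rightarrow> (nat \<Rightarrow> int) set" where
  "posroots_A r = {(\<lambda>k. eps i k - eps j k) | i j. 1 \<le> i \<and> i < j \<and> j \<le> r + 1}"

definition simple_root :: "nat \<Rightarrow> nat \<Rightarrow> int" where
  "simple_root i = (\<lambda>k. eps i k - eps (i + 1) k)"

definition msum_vec :: "(nat \<Rightarrow> int) multiset \<Rightarrow> nat \<Rightarrow> int" where
  "msum_vec M = (\<lambda>k. sum_mset (image_mset (\<lambda>v. v k) M))"

definition kostant_A :: "nat \<Rightarrow> (nat \<Rightarrow> int) \<Rightarrow> nat" where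
  "kostant_A r \<mu> = card {M. set_mset M \<subseteq> posroots_A r \<and> msum_vec M = \<mu>}"

end

theory Submission
  imports Defs
begin

text \<open>Put \<open>n = r + 1\<close>; the weight \<open>2\<alpha>\<^sub>1 + \<dots> + 2\<alpha>\<^sub>r\<close> is \<open>2\<epsilon>\<^sub>1 - 2\<epsilon>\<^sub>n\<close>.
  We count decompositions of all weights \<open>\<epsilon>\<^sub>a + \<epsilon>\<^sub>b - 2\<epsilon>\<^sub>n\<close>, \<open>a \<le> b\<close>, into positive
  roots \<open>\<epsilon>\<^sub>i - \<epsilon>\<^sub>j\<close>. Since the coordinates below \<open>a\<close> vanish, every root used starts
  at an index \<open>\<ge> a\<close>, and coordinate \<open>a\<close> shows that exactly one root (two if \<open>a = b\<close>)
  starts at \<open>a\<close>. Removing the roots \<open>\<epsilon>\<^sub>a - \<epsilon>\<^sub>j\<close> starting at \<open>a\<close> leaves a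
  decomposition of \<open>\<epsilon>\<^sub>j + \<epsilon>\<^sub>b - 2\<epsilon>\<^sub>n\<close> (resp. \<open>\<epsilon>\<^sub>j + \<epsilon>\<^sub>k - 2\<epsilon>\<^sub>n\<close>), which gives a
  recursion in \<open>a\<close> solved in closed form by \<open>kcount\<close>. Its diagonal values satisfy
  \<open>P(d + 2) = 5 P(d + 1) - 5 P(d)\<close>, whose characteristic roots are \<open>(5 \<plusminus> \<surd>5) / 2\<close>.\<close>

definition pos_root :: "nat \<Rightarrow> nat \<Rightarrow> nat \<Rightarrow> int" where
  "pos_root i j = (\<lambda>k. eps i k - eps j k)"

definition posroots_from :: "nat \<Rightarrow> nat \<Rightarrow> (nat \<Rightarrow> int) set" where
  "posroots_from r x = {pos_root i j | i j. x \<le> i \<and> i < j \<and> j \<le> r + 1}"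

lemma pos_root_apply: "pos_root i j k = (if k = i then 1 else 0) - (if k = j then 1 else 0)"
  by (simp add: pos_root_def eps_def)

lemma posroots_A_eq: "posroots_A r = posroots_from r 1"
  by (simp add: posroots_A_def posroots_from_def pos_root_def)

lemma pos_root_inj:
  assumes "i < j" "i' < j'" "pos_root i j = pos_root i' j'"
  shows "i = i' \<and> j = j'"
proof -
  have "pos_root i j i = pos_root i' j' i" "pos_root i j j = pos_root i' j' j" using assms(3) by auto
  then show ?thesis using assms(1,2) unfolding pos_root_apply by (auto split: if_splits)
qed

lemma pos_root_in_posroots_from: "x \<le> i \<Longrightarrow> i < j \<Longrightarrow> j \<le> r + 1 \<Longrightarrow> pos_root i j \<in> posroots_from r x"
  unfolding posroots_from_def by blast

lemma posroots_from_antimono: "x \<le> x' \<Longrightarrow> posroots_from r x' \<subseteq> posroots_from r x"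
  unfolding posroots_from_def by fastforce

lemma posroots_from_below: "v \<in> posroots_from r x \<Longrightarrow> k < x \<Longrightarrow> v k = 0"
  unfolding posroots_from_def by (auto simp: pos_root_apply)

lemma posroots_from_Suc:
  assumes "v \<in> posroots_from r x" "v x \<noteq> 1"
  shows "v \<in> posroots_from r (Suc x)"
proof -
  obtain i j where "v = pos_root i j" "x \<le> i" "i < j" "j \<le> r + 1"
    using assms(1) by (auto simp: posroots_from_def)
  moreover have "i \<noteq> x" using calculation assms(2) by (auto simp: pos_root_apply)
  ultimately show ?thesis by (auto intro: pos_root_in_posroots_from)
qed

lemma msum_vec_empty [simp]: "msum_vec {#} = (\<lambda>_. 0)"
  by (simp add: msum_vec_def)

lemma msum_vec_add_mset [simp]: "msum_vec (add_mset v M) k = v k + msum_vec M k"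
  by (simp add: msum_vec_def)

lemma msum_vec_eq_size_starting:
  assumes "set_mset M \<subseteq> posroots_from r x"
  shows "msum_vec M x = int (size {#v \<in># M. v x = 1#})"
  using assms
proof (induction M)
  case (add v M)
  then obtain i j where "v = pos_root i j" "x \<le> i" "i < j" by (auto simp: posroots_from_def)
  then have "v x = (if i = x then 1 else 0)" by (simp add: pos_root_apply)
  with add show ?case by auto
qed simp

text \<open>Coordinate \<open>x\<close> of a sum of roots starting at \<open>x\<close> or later counts the roots starting
  exactly at \<open>x\<close>; so if it vanishes, all roots start later.\<close>
lemma posroots_from_vanishing_below:
  assumes "set_mset M \<subseteq> posroots_A r" "\<forall>k<x. msum_vec M k = 0"
  shows "set_mset M \<subseteq> posroots_from r x"
  using assms(2)
proof (induction x)
  case 0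
  then show ?case using assms(1) posroots_from_antimono[of 0 1 r] by (simp add: posroots_A_eq)
next
  case (Suc x)
  then have M: "set_mset M \<subseteq> posroots_from r x" by simp
  have "size {#v \<in># M. v x = 1#} = 0"
    using msum_vec_eq_size_starting[OF M] Suc.prems by simp
  then have "\<forall>v\<in>#M. v x \<noteq> 1" by (simp add: filter_mset_eq_conv)
  then show ?case using M posroots_from_Suc by blast
qed

lemma filter_mset_split_unique:
  assumes "\<forall>v\<in>#A. P v" "\<forall>v\<in>#A'. P v" "\<forall>v\<in>#B. \<not> P v" "\<forall>v\<in>#B'. \<not> P v"
    and "A + B = A' + B'"
  shows "A = A' \<and> B = B'"
proof -
  have keep: "filter_mset Q M = M" if "\<forall>v\<in>#M. Q v" for Q and M :: "'a multiset"
    using that by (induction M) auto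
  have "filter_mset P (A + B) = A" "filter_mset P (A' + B') = A'"
    "filter_mset (Not \<circ> P) (A + B) = B" "filter_mset (Not \<circ> P) (A' + B') = B'"
    using assms(1-4) keep[of A P] keep[of A' P] keep[of B "Not \<circ> P"] keep[of B' "Not \<circ> P"]
    by simp_all
  then show ?thesis using assms(5) by metis
qed

definition pair_weight :: "nat \<Rightarrow> nat \<Rightarrow> nat \<Rightarrow> nat \<Rightarrow> int" where
  "pair_weight n a b = (\<lambda>k. eps a k + eps b k - 2 * eps n k)"

definition root_msets :: "nat \<Rightarrow> nat \<Rightarrow> nat \<Rightarrow> (nat \<Rightarrow> int) multiset set" where
  "root_msets r a b = {M. set_mset M \<subseteq> posroots_A r \<and> msum_vec M = pair_weight (r + 1) a b}"

lemma root_msets_commute: "root_msets r a b = root_msets r b a"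
  unfolding root_msets_def pair_weight_def by (simp add: add.commute)

lemma root_msets_start_ge:
  assumes "M \<in> root_msets r a b" "a \<le> r + 1" "b \<le> r + 1"
  shows "set_mset M \<subseteq> posroots_from r (min a b)"
  using assms by (intro posroots_from_vanishing_below) (auto simp: root_msets_def pair_weight_def eps_def)

lemma root_msets_coord_below:
  assumes "M \<in> root_msets r a b" "a \<le> r + 1" "b \<le> r + 1" "k < a" "k < b" "v \<in># M"
  shows "v k = 0"
  using root_msets_start_ge[OF assms(1-3)] assms(4-6) posroots_from_below by fastforce

lemma root_msets_top: "root_msets r (r + 1) (r + 1) = {{#}}"
proof -
  have "posroots_from r (r + 1) = {}" by (auto simp: posroots_from_def)
  then have "M = {#}" if "M \<in> root_msets r (r + 1) (r + 1)" for M
    using root_msets_start_ge[OF that] by simp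
  then show ?thesis by (auto simp: root_msets_def pair_weight_def)
qed

lemma root_msets_starting_part:
  assumes "M \<in> root_msets r x y" "x \<le> y" "y \<le> r + 1" "x < r + 1"
  shows "\<forall>v\<in>#{#v \<in># M. v x = 1#}. \<exists>j. v = pos_root x j \<and> x < j \<and> j \<le> r + 1"
    and "size {#v \<in># M. v x = 1#} = (if x = y then 2 else 1)"
proof -
  have M: "set_mset M \<subseteq> posroots_from r x" using root_msets_start_ge[OF assms(1)] assms by simp
  show "\<forall>v\<in>#{#v \<in># M. v x = 1#}. \<exists>j. v = pos_root x j \<and> x < j \<and> j \<le> r + 1"
  proof
    fix v assume "v \<in># {#v \<in># M. v x = 1#}"
    then have "v \<in> posroots_from r x" "v x = 1" using M by auto
    then obtain i j where "v = pos_root i j" "x \<le> i" "i < j" "j \<le> r + 1" "v x = 1"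
      by (auto simp: posroots_from_def)
    then show "\<exists>j. v = pos_root x j \<and> x < j \<and> j \<le> r + 1"
      by (auto simp: pos_root_apply split: if_splits)
  qed
  have "msum_vec M x = (if x = y then 2 else 1)"
    using assms by (auto simp: root_msets_def pair_weight_def eps_def)
  then show "size {#v \<in># M. v x = 1#} = (if x = y then 2 else 1)"
    using msum_vec_eq_size_starting[OF M] by (cases "x = y") simp_all
qed

lemma add_mset_pos_root_in_root_msets_iff:
  assumes "1 \<le> x" "x < j" "j \<le> r + 1"
  shows "add_mset (pos_root x j) B \<in> root_msets r x y \<longleftrightarrow> B \<in> root_msets r j y"
proof -
  have "pos_root x j \<in> posroots_A r"
    using assms by (simp add: posroots_A_eq pos_root_in_posroots_from)
  moreover have "pos_root x j k + pair_weight (r + 1) j y k = pair_weight (r + 1) x y k" for k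
    by (simp add: pos_root_def pair_weight_def)
  then have "msum_vec (add_mset (pos_root x j) B) = pair_weight (r + 1) x y
      \<longleftrightarrow> msum_vec B = pair_weight (r + 1) j y"
    by (auto simp: fun_eq_iff) (metis add_left_cancel)
  ultimately show ?thesis by (auto simp: root_msets_def)
qed

lemma root_msets_offdiag_bij:
  assumes "1 \<le> x" "x < y" "y \<le> r + 1"
  shows "bij_betw (\<lambda>(j, B). add_mset (pos_root x j) B)
    (SIGMA j:{x<..r + 1}. root_msets r j y) (root_msets r x y)"
proof (rule bij_betwI')
  fix p q assume "p \<in> (SIGMA j:{x<..r + 1}. root_msets r j y)" "q \<in> (SIGMA j:{x<..r + 1}. root_msets r j y)"
  then obtain j B j' B' where p: "p = (j, B)" "x < j" "j \<le> r + 1" "B \<in> root_msets r j y"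
    and q: "q = (j', B')" "x < j'" "j' \<le> r + 1" "B' \<in> root_msets r j' y"
    by auto
  have "v x = 0" if "v \<in># B" for v
    using root_msets_coord_below[OF p(4) _ _ _ _ that] p(2,3) assms(2,3) by simp
  moreover have "v x = 0" if "v \<in># B'" for v
    using root_msets_coord_below[OF q(4) _ _ _ _ that] q(2,3) assms(2,3) by simp
  ultimately have "\<forall>v\<in>#B. v x \<noteq> 1" "\<forall>v\<in>#B'. v x \<noteq> 1" by (metis zero_neq_one)+
  moreover have "pos_root x j x = 1" "pos_root x j' x = 1" using p q by (simp_all add: pos_root_apply)
  ultimately have "{#pos_root x j#} + B = {#pos_root x j'#} + B' \<Longrightarrow> pos_root x j = pos_root x j' \<and> B = B'"
    using filter_mset_split_unique[of "{#pos_root x j#}" "\<lambda>v. v x = 1" "{#pos_root x j'#}" B B'] by simp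
  then show "((\<lambda>(j, B). add_mset (pos_root x j) B) p = (\<lambda>(j, B). add_mset (pos_root x j) B) q) = (p = q)"
    using pos_root_inj[of x j x j'] p q by auto
next
  fix p assume "p \<in> (SIGMA j:{x<..r + 1}. root_msets r j y)"
  then show "(\<lambda>(j, B). add_mset (pos_root x j) B) p \<in> root_msets r x y"
    using add_mset_pos_root_in_root_msets_iff assms by auto
next
  fix M assume M: "M \<in> root_msets r x y"
  obtain j where A: "{#v \<in># M. v x = 1#} = {#pos_root x j#}" "x < j" "j \<le> r + 1"
    using root_msets_starting_part[OF M] assms size_1_singleton_mset by fastforce
  then have "M = add_mset (pos_root x j) {#v \<in># M. v x \<noteq> 1#}"
    using multiset_partition[of M "\<lambda>v. v x = 1"] by simp
  moreover have "{#v \<in># M. v x \<noteq> 1#} \<in> root_msets r j y"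
    using add_mset_pos_root_in_root_msets_iff[of x j r] M A(2,3) assms(1) calculation by metis
  ultimately show "\<exists>p\<in>(SIGMA j:{x<..r + 1}. root_msets r j y). M = (\<lambda>(j, B). add_mset (pos_root x j) B) p"
    using A(2,3) by (intro bexI[of _ "(j, {#v \<in># M. v x \<noteq> 1#})"]) auto
qed

lemma add_mset_two_pos_roots_in_root_msets_iff:
  assumes "1 \<le> x" "x < j" "j \<le> r + 1" "x < k" "k \<le> r + 1"
  shows "add_mset (pos_root x j) (add_mset (pos_root x k) B) \<in> root_msets r x x
    \<longleftrightarrow> B \<in> root_msets r j k"
  using add_mset_pos_root_in_root_msets_iff[OF assms(1-3)] add_mset_pos_root_in_root_msets_iff[OF assms(1,4,5)]
  by (metis root_msets_commute)

lemma root_msets_diag_bij: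
  assumes "1 \<le> x" "x < r + 1"
  shows "bij_betw (\<lambda>((j, k), B). add_mset (pos_root x j) (add_mset (pos_root x k) B))
    (SIGMA (j, k):(SIGMA j:{x<..r + 1}. {j..r + 1}). root_msets r j k) (root_msets r x x)"
proof (rule bij_betwI')
  fix p q assume "p \<in> (SIGMA (j, k):(SIGMA j:{x<..r + 1}. {j..r + 1}). root_msets r j k)"
    "q \<in> (SIGMA (j, k):(SIGMA j:{x<..r + 1}. {j..r + 1}). root_msets r j k)"
  then obtain j k B j' k' B' where
    p: "p = ((j, k), B)" "x < j" "j \<le> k" "k \<le> r + 1" "B \<in> root_msets r j k" and
    q: "q = ((j', k'), B')" "x < j'" "j' \<le> k'" "k' \<le> r + 1" "B' \<in> root_msets r j' k'"
    by auto
  have "v x = 0" if "v \<in># B" for v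
    using root_msets_coord_below[OF p(5) _ _ _ _ that] p(2-4) by simp
  moreover have "v x = 0" if "v \<in># B'" for v
    using root_msets_coord_below[OF q(5) _ _ _ _ that] q(2-4) by simp
  ultimately have "\<forall>v\<in>#B. v x \<noteq> 1" "\<forall>v\<in>#B'. v x \<noteq> 1" by (metis zero_neq_one)+
  moreover have "\<forall>v\<in>#{#pos_root x j, pos_root x k#}. v x = 1" "\<forall>v\<in>#{#pos_root x j', pos_root x k'#}. v x = 1"
    using p q by (auto simp: pos_root_apply)
  ultimately have "{#pos_root x j, pos_root x k#} + B = {#pos_root x j', pos_root x k'#} + B'
      \<Longrightarrow> {#pos_root x j, pos_root x k#} = {#pos_root x j', pos_root x k'#} \<and> B = B'"
    using filter_mset_split_unique by blast
  moreover have "{#pos_root x j, pos_root x k#} = {#pos_root x j', pos_root x k'#} \<Longrightarrow> j = j' \<and> k = k'"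
  proof -
    assume eq: "{#pos_root x j, pos_root x k#} = {#pos_root x j', pos_root x k'#}"
    have inj: "pos_root x a = pos_root x b \<Longrightarrow> a = b" if "x < a" "x < b" for a b
      using pos_root_inj that by blast
    from eq have "j = j' \<and> k = k' \<or> j = k' \<and> k = j'"
      using inj p(2,3) q(2,3) by (auto simp: add_eq_conv_ex)
    then show "j = j' \<and> k = k'" using p(3) q(3) by auto
  qed
  ultimately show "((\<lambda>((j, k), B). add_mset (pos_root x j) (add_mset (pos_root x k) B)) p =
      (\<lambda>((j, k), B). add_mset (pos_root x j) (add_mset (pos_root x k) B)) q) = (p = q)"
    using p(1) q(1) by auto
next
  fix p assume "p \<in> (SIGMA (j, k):(SIGMA j:{x<..r + 1}. {j..r + 1}). root_msets r j k)"
  then show "(\<lambda>((j, k), B). add_mset (pos_root x j) (add_mset (pos_root x k) B)) p \<in> root_msets r x x"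
    using add_mset_two_pos_roots_in_root_msets_iff assms by auto
next
  fix M assume M: "M \<in> root_msets r x x"
  have size: "size {#v \<in># M. v x = 1#} = Suc 1"
    using root_msets_starting_part(2)[OF M] assms by simp
  then obtain v N where vN: "{#v \<in># M. v x = 1#} = add_mset v N"
    using size_eq_Suc_imp_eq_union by blast
  then have "size N = 1" using size by simp
  then obtain w where "N = {#w#}" using size_1_singleton_mset by blast
  with vN have vw: "{#v \<in># M. v x = 1#} = {#v, w#}" by simp
  have start: "\<exists>j. u = pos_root x j \<and> x < j \<and> j \<le> r + 1" if "u \<in># {#v, w#}" for u
    using root_msets_starting_part(1)[OF M _ _ assms(2)] assms(2) that unfolding vw by auto
  obtain j where j: "v = pos_root x j" "x < j" "j \<le> r + 1" using start[of v] by auto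
  obtain k where k: "w = pos_root x k" "x < k" "k \<le> r + 1" using start[of w] by auto
  obtain j k where A: "{#v \<in># M. v x = 1#} = {#pos_root x j, pos_root x k#}"
      "x < j" "j \<le> k" "k \<le> r + 1"
  proof (cases "j \<le> k")
    case True
    then show ?thesis using that[of j k] vw j k by simp
  next
    case False
    then show ?thesis using that[of k j] vw j k by (simp add: add_mset_commute)
  qed
  then have M_eq: "M = add_mset (pos_root x j) (add_mset (pos_root x k) {#v \<in># M. v x \<noteq> 1#})"
    using multiset_partition[of M "\<lambda>v. v x = 1"] by simp
  have "add_mset (pos_root x j) (add_mset (pos_root x k) {#v \<in># M. v x \<noteq> 1#}) \<in> root_msets r x x"
    using M unfolding M_eq[symmetric] .
  then have "{#v \<in># M. v x \<noteq> 1#} \<in> root_msets r j k"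
    using add_mset_two_pos_roots_in_root_msets_iff[OF assms(1) A(2) _ _ A(4)] A(2-4) by simp
  with M_eq show "\<exists>p\<in>(SIGMA (j, k):(SIGMA j:{x<..r + 1}. {j..r + 1}). root_msets r j k).
      M = (\<lambda>((j, k), B). add_mset (pos_root x j) (add_mset (pos_root x k) B)) p"
    using A(2-4) by (intro bexI[of _ "((j, k), {#v \<in># M. v x \<noteq> 1#})"]) auto
qed

text \<open>Writing \<open>d\<close> for the distance of an index from \<open>n = r + 1\<close>: \<open>pdiag d\<close> counts
  the decompositions of \<open>2\<epsilon>\<^bsub>n-d\<^esub> - 2\<epsilon>\<^sub>n\<close>, \<open>poff d\<close> those of
  \<open>\<epsilon>\<^bsub>n-d\<^esub> + \<epsilon>\<^sub>j - 2\<epsilon>\<^sub>n\<close> summed over \<open>n - d < j \<le> n\<close>, and \<open>prow d\<close>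
  the same sum including \<open>j = n - d\<close>. Then \<open>pdiag (Suc d) = pdiag d + prow d\<close> except at
  \<open>d = 0\<close>, since \<open>pdiag 0 = 1\<close> counts the empty decomposition of \<open>0\<close>.\<close>
fun pdiag :: "nat \<Rightarrow> nat" and poff :: "nat \<Rightarrow> nat" where
  "pdiag 0 = 1"
| "pdiag (Suc 0) = 1"
| "pdiag (Suc (Suc d)) = 2 * pdiag (Suc d) + poff (Suc d)"
| "poff 0 = 0"
| "poff (Suc d) = 3 * poff d + pdiag d"

definition prow :: "nat \<Rightarrow> nat" where
  "prow d = pdiag d + poff d"

lemma poff_Suc_prow: "poff (Suc d) = 2 * poff d + prow d"
  by (simp add: prow_def)

lemma pdiag_Suc_prow: "0 < d \<Longrightarrow> pdiag (Suc d) = pdiag d + prow d"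
  by (cases d) (simp_all add: prow_def)

lemma pdiag_recurrence: "0 < d \<Longrightarrow> pdiag (Suc (Suc d)) + 5 * pdiag d = 5 * pdiag (Suc d)"
  by (cases d) simp_all

definition kcount :: "nat \<Rightarrow> nat \<Rightarrow> nat \<Rightarrow> nat" where
  "kcount n a b = (if a = b then pdiag (n - a) else 2 ^ (b - a - 1) * prow (n - b))"

lemma poff_eq_sum:
  assumes "y \<le> n"
  shows "(\<Sum>j\<in>{y<..n}. 2 ^ (j - y - 1) * prow (n - j)) = poff (n - y)"
  using assms
proof (induction y rule: inc_induct)
  case (step y)
  have "{y<..n} = insert (Suc y) {Suc y<..n}" using step.hyps by auto
  moreover have "(\<Sum>j\<in>{Suc y<..n}. 2 ^ (j - y - 1) * prow (n - j))
      = 2 * (\<Sum>j\<in>{Suc y<..n}. 2 ^ (j - Suc y - 1) * prow (n - j))"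
    unfolding sum_distrib_left
    by (intro sum.cong) (auto simp flip: power_Suc intro!: arg_cong[where f = "\<lambda>e. 2 ^ e * _"])
  moreover have "n - y = Suc (n - Suc y)" using step.hyps by simp
  ultimately show ?case using step.IH by (simp add: poff_Suc_prow prow_def)
qed simp

lemma kcount_row_sum: "y \<le> n \<Longrightarrow> (\<Sum>k\<in>{y..n}. kcount n y k) = prow (n - y)"
proof -
  assume "y \<le> n"
  then have "{y..n} = insert y {y<..n}" by auto
  then show ?thesis
    using poff_eq_sum[OF \<open>y \<le> n\<close>] by (simp add: kcount_def prow_def)
qed

lemma kcount_offdiag_sum:
  assumes "x < y" "y \<le> n"
  shows "(\<Sum>j\<in>{x<..n}. kcount n (min j y) (max j y)) = kcount n x y"
proof -
  have "x \<le> y - 1" using assms by simp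
  then have "(\<Sum>j\<in>{x<..n}. kcount n (min j y) (max j y)) = 2 ^ (y - x - 1) * prow (n - y)"
  proof (induction x rule: inc_induct)
    case base
    have "{y - 1<..n} = {y..n}" using assms by auto
    moreover have "(\<Sum>j\<in>{y..n}. kcount n (min j y) (max j y)) = (\<Sum>k\<in>{y..n}. kcount n y k)"
      by (rule sum.cong) auto
    ultimately show ?case using kcount_row_sum[OF assms(2)] by simp
  next
    case (step z)
    have "{z<..n} = insert (Suc z) {Suc z<..n}" "Suc z \<noteq> y" using step.hyps assms by auto
    moreover have "y - z - 1 = Suc (y - Suc z - 1)" using step.hyps by simp
    ultimately show ?case using step.IH step.hyps by (simp add: kcount_def)
  qed
  then show ?thesis using assms(1) by (simp add: kcount_def)
qed

lemma kcount_diag_sum: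
  assumes "x < n"
  shows "(\<Sum>j\<in>{x<..n}. \<Sum>k\<in>{j..n}. kcount n j k) = kcount n x x"
proof -
  have "x \<le> n - 1" using assms by simp
  then have "(\<Sum>j\<in>{x<..n}. prow (n - j)) = pdiag (n - x)"
  proof (induction x rule: inc_induct)
    case base
    have "{n - 1<..n} = {n}" using assms by auto
    then show ?case using assms by (simp add: prow_def)
  next
    case (step z)
    have "{z<..n} = insert (Suc z) {Suc z<..n}" using step.hyps by auto
    moreover have "n - z = Suc (n - Suc z)" "0 < n - Suc z" using step.hyps by auto
    ultimately show ?case using step.IH pdiag_Suc_prow by (simp add: add.commute)
  qed
  then show ?thesis using kcount_row_sum by (simp add: kcount_def)
qed

lemma card_root_msets:
  assumes "1 \<le> x" "x \<le> y" "y \<le> r + 1"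
  shows "finite (root_msets r x y) \<and> card (root_msets r x y) = kcount (r + 1) x y"
  using assms
proof (induction "r + 1 - x" arbitrary: x y rule: less_induct)
  case less
  have IH: "finite (root_msets r a b) \<and> card (root_msets r a b) = kcount (r + 1) (min a b) (max a b)"
    if "x < a" "x < b" "a \<le> r + 1" "b \<le> r + 1" for a b
    using less.hyps[of "min a b" "max a b"] that less.prems(1) root_msets_commute[of r a b]
    by (cases "a \<le> b") (simp_all add: min_def max_def)
  consider "x = r + 1" | "x < y" | "x = y" "x < r + 1" using less.prems by linarith
  then show ?case
  proof cases
    case 1
    then show ?thesis using less.prems root_msets_top[of r] by (simp add: kcount_def)
  next
    case 2
    note bij = root_msets_offdiag_bij[OF less.prems(1) 2 less.prems(3)]
    have fin: "\<forall>j\<in>{x<..r + 1}. finite (root_msets r j y)" using IH 2 less.prems by auto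
    have "card (root_msets r x y) = (\<Sum>j\<in>{x<..r + 1}. card (root_msets r j y))"
      using bij_betw_same_card[OF bij] card_SigmaI[OF _ fin] by simp
    also have "\<dots> = (\<Sum>j\<in>{x<..r + 1}. kcount (r + 1) (min j y) (max j y))"
      using IH 2 less.prems by (intro sum.cong) auto
    also have "\<dots> = kcount (r + 1) x y" using kcount_offdiag_sum 2 less.prems by simp
    finally show ?thesis using bij_betw_finite[OF bij] fin by auto
  next
    case 3
    let ?S = "SIGMA j:{x<..r + 1}. {j..r + 1}"
    note bij = root_msets_diag_bij[OF less.prems(1) 3(2)]
    have fin: "\<forall>p\<in>?S. finite (case p of (j, k) \<Rightarrow> root_msets r j k)" using IH by auto
    have "card (root_msets r x y) = (\<Sum>p\<in>?S. card (case p of (j, k) \<Rightarrow> root_msets r j k))"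
      using bij_betw_same_card[OF bij] card_SigmaI[OF _ fin] 3(1) by simp
    also have "\<dots> = (\<Sum>(j, k)\<in>?S. card (root_msets r j k))"
      by (rule sum.cong) auto
    also have "\<dots> = (\<Sum>j\<in>{x<..r + 1}. \<Sum>k\<in>{j..r + 1}. kcount (r + 1) j k)"
      using IH by (subst sum.Sigma) (auto intro!: sum.cong)
    also have "\<dots> = kcount (r + 1) x y" using kcount_diag_sum[OF 3(2)] 3(1) by simp
    finally show ?thesis using bij_betw_finite[OF bij] fin 3(1) by auto
  qed
qed

definition binet :: "nat \<Rightarrow> real" where
  "binet d = (((5 - sqrt 5) / 2) ^ d + ((5 + sqrt 5) / 2) ^ d) / 5"

lemma binet_recurrence: "binet (Suc (Suc d)) = 5 * binet (Suc d) - 5 * binet d"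
proof -
  have step: "\<beta> ^ Suc (Suc d) = 5 * \<beta> ^ Suc d - 5 * \<beta> ^ d" if "\<beta> ^ 2 = 5 * \<beta> - 5" for \<beta> :: real
  proof -
    have "\<beta> ^ Suc (Suc d) = \<beta> ^ 2 * \<beta> ^ d" by (simp add: power2_eq_square)
    then show ?thesis unfolding that by (simp add: algebra_simps)
  qed
  define \<beta>\<^sub>1 \<beta>\<^sub>2 :: real where "\<beta>\<^sub>1 = (5 - sqrt 5) / 2" and "\<beta>\<^sub>2 = (5 + sqrt 5) / 2"
  have "\<beta>\<^sub>1 ^ 2 = 5 * \<beta>\<^sub>1 - 5" "\<beta>\<^sub>2 ^ 2 = 5 * \<beta>\<^sub>2 - 5"
    by (simp_all add: \<beta>\<^sub>1_def \<beta>\<^sub>2_def power2_eq_square field_simps)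
  then have "\<beta>\<^sub>1 ^ Suc (Suc d) + \<beta>\<^sub>2 ^ Suc (Suc d) = 5 * (\<beta>\<^sub>1 ^ Suc d + \<beta>\<^sub>2 ^ Suc d) - 5 * (\<beta>\<^sub>1 ^ d + \<beta>\<^sub>2 ^ d)"
    using step by (simp only:) (simp add: algebra_simps)
  then show ?thesis unfolding binet_def \<beta>\<^sub>1_def[symmetric] \<beta>\<^sub>2_def[symmetric] by (simp add: field_simps)
qed

lemma binet_1: "binet 1 = 1"
  by (simp add: binet_def field_simps)

lemma binet_2: "binet 2 = 3"
  by (simp add: binet_def power2_eq_square field_simps)

lemma pdiag_eq_binet: "0 < d \<Longrightarrow> real (pdiag d) = binet d"
proof (induction d rule: less_induct)
  case (less d)
  consider "d = 1" | "d = 2" | e where "d = Suc (Suc e)" "0 < e"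
    using less.prems by atomize_elim presburger
  then show ?case
  proof cases
    case 1
    have "pdiag 1 = 1" by (simp add: One_nat_def)
    then show ?thesis using 1 binet_1 by simp
  next
    case 2
    have "pdiag 2 = 3" by (simp add: numeral_2_eq_2)
    then show ?thesis using 2 binet_2 by simp
  next
    case 3
    have "real (pdiag (Suc (Suc e))) + 5 * real (pdiag e) = 5 * real (pdiag (Suc e))"
      using arg_cong[OF pdiag_recurrence[OF 3(2)], of real] by simp
    then show ?thesis
      using less.IH[of e] less.IH[of "Suc e"] binet_recurrence[of e] 3 by simp
  qed
qed

lemma binet_eq: "binet d = ((5 - sqrt 5) ^ d + (5 + sqrt 5) ^ d) / (5 * 2 ^ d)"
  unfolding binet_def power_divide add_divide_distrib[symmetric] divide_divide_eq_left
  by (simp add: mult.commute)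

lemma weight_of_twice_simple_roots:
  "(\<lambda>k. \<Sum>i=1..r. 2 * simple_root i k) = pair_weight (r + 1) 1 1"
proof
  fix k show "(\<Sum>i=1..r. 2 * simple_root i k) = pair_weight (r + 1) 1 1 k"
    by (induction r) (auto simp: pair_weight_def simple_root_def eps_def)
qed

theorem mainTheorem9:
  fixes r :: nat
  assumes "r \<ge> 2"
  shows "real (kostant_A r (\<lambda>k. \<Sum>i=1..r. 2 * simple_root i k))
       = ((5 - sqrt 5) ^ r + (5 + sqrt 5) ^ r) / (5 * 2 ^ r)"
proof -
  have "kostant_A r (\<lambda>k. \<Sum>i=1..r. 2 * simple_root i k) = card (root_msets r 1 1)"
    unfolding weight_of_twice_simple_roots kostant_A_def root_msets_def ..
  also have "\<dots> = pdiag r"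
    using card_root_msets[of 1 1 r] by (simp add: kcount_def)
  finally show ?thesis
    using pdiag_eq_binet[of r] binet_eq[of r] assms by simp
qed

end
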